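(* Let $\mathcal G$ be a core network with multiple input nodes $\iota_1,\dots,\iota_n$ ($n\ge2$) and output node $o$. If $B_s$ is an irreducible structural homeostasis block of $\langle H\rangle$, so that $\det(B_s)$ is an irreducible factor of $\det\langle H\rangle$, then $\mathcal G$ has adjacent absolutely super-simple nodes $\rho_k,\rho_{k+1}$ such that $\det(B_s)=\det\big(H(\mathcal L'(\rho_k,\rho_{k+1}))\big)$.
   Context: Node $b$ is downstream from $a$ (and $a$ upstream from $b$) if there is a directed path from $a$ to $b$. Core network: every node upstream from $o$ and downstream from at least one input. Simple path: visits each node at most once; $\iota_mo$-simple path: simple path from $\iota_m$ to $o$. A node is $\iota_m$-simple if on some $\iota_mo$-simple path, $\iota_m$-appendage if downstream from $\iota_m$ but not $\iota_m$-simple; absolutely simple/appendage if so for all $m$. Absolutely super-simple: on every $\iota_mo$-simple path for every $m$; these are ordered $\rho_1>\cdots>\rho_p>o$ ($b$ after $a$ on every such path), adjacent = consecutive. $\mathcal L(\rho_k,\rho_{k+1})$: absolutely simple nodes $\rho$ such that for some $m$ some $\iota_mo$-simple path visits $\rho_k,\rho,\rho_{k+1}$ in that order. For an $\iota_mo$-simple path $S$, $CS$ is the subnetwork of nodes of $\mathcal G$ not on $S$ with all arrows between them; nodes are $CS$-path equivalent if joined by directed paths inside $CS$ in both directions. $\mathcal L'(\rho_k,\rho_{k+1})$: nodes of $\mathcal L(\rho_k,\rho_{k+1})$ plus all absolutely appendage nodes $CS_m$-path equivalent to nodes of $\mathcal L(\rho_k,\rho_{k+1})$ for some $m$ and some $\iota_mo$-simple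 path $S_m$, with arrows of $\mathcal G$ among them; it is regarded as an input-output network with input node $\rho_k$ and output node $\rho_{k+1}$. An admissible system has variables $x_j$ per node, $\dot x_{\iota_m}=f_{\iota_m}(X,\mathcal I)$, $\dot x_j=f_j(X)$ otherwise, $f_{j,x_\ell}\equiv0$ unless there is an arrow $\ell\to j$ (all nodes self-coupled), $f_{\iota_m,\mathcal I}\neq0$; these entries are independent indeterminates. For a subnetwork $\mathcal K$ with input node $a$ and output node $b$, its homeostasis matrix $H(\mathcal K)$ is $(f_{j,x_\ell})_{j,\ell\in\mathcal K}$ with the row of $a$ and the column of $b$ deleted. $\langle H\rangle$ is the Jacobian over all nodes of $\mathcal G$ (output last) with last column replaced by the column with $-f_{\iota_m,\mathcal I}$ in row $\iota_m$ and $0$ elsewhere. By Frobenius–König theory, for suitable permutation matrices $P,Q$, $P\langle H\rangle Q$ is block upper triangular with square fully indecomposable diagonal blocks (irreducible homeostasis blocks, with irreducible determinants). A diagonal block of order $k$ containing no $f_{\iota_m,\mathcal I}$ and exactly $k-1$ self-coupling entries $f_{\ell,x_\ell}$ is a structural homeostasis block. *)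

theory Defs
  imports Main "Jordan_Normal_Form.Determinant"
begin

text \<open>Networks: finite node set V, arrows E (pair (a,b) means a -> b), input set Ins, output out.\<close>

definition simple_path :: "('v \<times> 'v) set \<Rightarrow> 'v \<Rightarrow> 'v \<Rightarrow> 'v list \<Rightarrow> bool" where
  "simple_path E a b p \<longleftrightarrow> p \<noteq> [] \<and> hd p = a \<and> last p = b \<and> distinct p \<and>
     (\<forall>i. Suc i < length p \<longrightarrow> (p ! i, p ! Suc i) \<in> E)"

definition core_network :: "'v set \<Rightarrow> ('v \<times> 'v) set \<Rightarrow> 'v set \<Rightarrow> 'v \<Rightarrow> bool" where
  "core_network V E Ins out \<longleftrightarrow> finite V \<and> E \<subseteq> V \<times> V \<and> Ins \<subseteq> V \<and> out \<in> V \<and> out \<notin> Ins \<and>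
     (\<forall>v\<in>V. (v, out) \<in> E\<^sup>* \<and> (\<exists>i\<in>Ins. (i, v) \<in> E\<^sup>*))"

definition simple_node :: "('v \<times> 'v) set \<Rightarrow> 'v \<Rightarrow> 'v \<Rightarrow> 'v \<Rightarrow> bool" where
  "simple_node E i out v \<longleftrightarrow> (\<exists>p. simple_path E i out p \<and> v \<in> set p)"

definition appendage_node :: "('v \<times> 'v) set \<Rightarrow> 'v \<Rightarrow> 'v \<Rightarrow> 'v \<Rightarrow> bool" where
  "appendage_node E i out v \<longleftrightarrow> (i, v) \<in> E\<^sup>* \<and> \<not> simple_node E i out v"

definition abs_simple :: "('v \<times> 'v) set \<Rightarrow> 'v set \<Rightarrow> 'v \<Rightarrow> 'v \<Rightarrow> bool" where
  "abs_simple E Ins out v \<longleftrightarrow> (\<forall>i\<in>Ins. simple_node E i out v)"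

definition abs_appendage :: "('v \<times> 'v) set \<Rightarrow> 'v set \<Rightarrow> 'v \<Rightarrow> 'v \<Rightarrow> bool" where
  "abs_appendage E Ins out v \<longleftrightarrow> (\<forall>i\<in>Ins. appendage_node E i out v)"

definition abs_super_simple :: "('v \<times> 'v) set \<Rightarrow> 'v set \<Rightarrow> 'v \<Rightarrow> 'v \<Rightarrow> bool" where
  "abs_super_simple E Ins out v \<longleftrightarrow> (\<forall>i\<in>Ins. \<forall>p. simple_path E i out p \<longrightarrow> v \<in> set p)"

definition before_on :: "'v list \<Rightarrow> 'v \<Rightarrow> 'v \<Rightarrow> bool" where
  "before_on p a b \<longleftrightarrow> (\<exists>x y. x < y \<and> y < length p \<and> p ! x = a \<and> p ! y = b)"

definition adjacent_super_simple :: "('v \<times> 'v) set \<Rightarrow> 'v set \<Rightarrow> 'v \<Rightarrow> 'v \<Rightarrow> 'v \<Rightarrow> bool" where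
  "adjacent_super_simple E Ins out a b \<longleftrightarrow>
     abs_super_simple E Ins out a \<and> abs_super_simple E Ins out b \<and> a \<noteq> b \<and>
     (\<forall>i\<in>Ins. \<forall>p. simple_path E i out p \<longrightarrow> before_on p a b) \<and>
     \<not> (\<exists>c. abs_super_simple E Ins out c \<and> c \<noteq> a \<and> c \<noteq> b \<and>
          (\<exists>i\<in>Ins. \<exists>p. simple_path E i out p \<and> before_on p a c \<and> before_on p c b))"

text \<open>The set L(a,b); "in that order" read non-strictly, so a and b belong to L(a,b).\<close>
definition L_set :: "'v set \<Rightarrow> ('v \<times> 'v) set \<Rightarrow> 'v set \<Rightarrow> 'v \<Rightarrow> 'v \<Rightarrow> 'v \<Rightarrow> 'v set" where
  "L_set V E Ins out a b = {v \<in> V. abs_simple E Ins out v \<and>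
     (\<exists>i\<in>Ins. \<exists>p. simple_path E i out p \<and>
        (\<exists>x y z. x \<le> y \<and> y \<le> z \<and> z < length p \<and> p ! x = a \<and> p ! y = v \<and> p ! z = b))}"

definition cs_equiv :: "'v set \<Rightarrow> ('v \<times> 'v) set \<Rightarrow> 'v list \<Rightarrow> 'v \<Rightarrow> 'v \<Rightarrow> bool" where
  "cs_equiv V E S u v \<longleftrightarrow> u \<in> V - set S \<and> v \<in> V - set S \<and>
     (u, v) \<in> (E \<inter> ((V - set S) \<times> (V - set S)))\<^sup>* \<and>
     (v, u) \<in> (E \<inter> ((V - set S) \<times> (V - set S)))\<^sup>*"

definition L'_set :: "'v set \<Rightarrow> ('v \<times> 'v) set \<Rightarrow> 'v set \<Rightarrow> 'v \<Rightarrow> 'v \<Rightarrow> 'v \<Rightarrow> 'v set" where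
  "L'_set V E Ins out a b = L_set V E Ins out a b \<union>
     {v \<in> V. abs_appendage E Ins out v \<and>
        (\<exists>i\<in>Ins. \<exists>S. simple_path E i out S \<and> (\<exists>u\<in>L_set V E Ins out a b. cs_equiv V E S u v))}"

text \<open>Generic Jacobian of an admissible system: the independent indeterminates f_{j,x_l}
  are evaluated at arbitrary real values A j l (polynomial identities over the reals are
  equivalent to identities of the evaluation functions).\<close>
definition jac :: "('v \<times> 'v) set \<Rightarrow> ('v \<Rightarrow> 'v \<Rightarrow> real) \<Rightarrow> 'v \<Rightarrow> 'v \<Rightarrow> real" where
  "jac E A j l = (if j = l \<or> (l, j) \<in> E then A j l else 0)"

text \<open>The matrix <H>: Jacobian with the output column replaced by (-f_{i,I}) at input rows;
  c i is the value of the indeterminate f_{i,I}.\<close>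
definition hH :: "('v \<times> 'v) set \<Rightarrow> 'v set \<Rightarrow> 'v \<Rightarrow> ('v \<Rightarrow> 'v \<Rightarrow> real) \<Rightarrow> ('v \<Rightarrow> real) \<Rightarrow> 'v \<Rightarrow> 'v \<Rightarrow> real" where
  "hH E Ins out A c j l = (if l = out then (if j \<in> Ins then - c j else 0) else jac E A j l)"

text \<open>Structural non-zero pattern of <H> (entry is a non-zero polynomial)\<close>
definition hH_nz :: "('v \<times> 'v) set \<Rightarrow> 'v set \<Rightarrow> 'v \<Rightarrow> 'v \<Rightarrow> 'v \<Rightarrow> bool" where
  "hH_nz E Ins out j l = (if l = out then j \<in> Ins else j = l \<or> (l, j) \<in> E)"

definition fully_indecomposable :: "('v \<Rightarrow> 'v \<Rightarrow> bool) \<Rightarrow> 'v set \<Rightarrow> 'v set \<Rightarrow> bool" where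
  "fully_indecomposable Z R C \<longleftrightarrow> card R = card C \<and> R \<noteq> {} \<and>
     (\<forall>S T. S \<subseteq> R \<longrightarrow> T \<subseteq> C \<longrightarrow> S \<noteq> {} \<longrightarrow> T \<noteq> {} \<longrightarrow> card R \<le> card S + card T \<longrightarrow>
        (\<exists>j\<in>S. \<exists>l\<in>T. Z j l))"

text \<open>Frobenius-Koenig normal form P<H>Q: rows and columns of V are distributed into q blocks
  (rb j = block of row j, cb l = block of column l); diagonal blocks square and fully
  indecomposable, all entries below the block diagonal structurally zero.\<close>
definition fk_decomposition :: "'v set \<Rightarrow> ('v \<Rightarrow> 'v \<Rightarrow> bool) \<Rightarrow> nat \<Rightarrow> ('v \<Rightarrow> nat) \<Rightarrow> ('v \<Rightarrow> nat) \<Rightarrow> bool" where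
  "fk_decomposition V Z q rb cb \<longleftrightarrow>
     (\<forall>v\<in>V. rb v < q \<and> cb v < q) \<and>
     (\<forall>i<q. fully_indecomposable Z {v \<in> V. rb v = i} {v \<in> V. cb v = i}) \<and>
     (\<forall>j\<in>V. \<forall>l\<in>V. cb l < rb j \<longrightarrow> \<not> Z j l)"

text \<open>Structural homeostasis block: no f_{i,I} entry, exactly (order - 1) self-coupling entries.\<close>
definition structural_block :: "'v set \<Rightarrow> 'v \<Rightarrow> 'v set \<Rightarrow> 'v set \<Rightarrow> bool" where
  "structural_block Ins out R C \<longleftrightarrow> \<not> (out \<in> C \<and> (\<exists>j\<in>R. j \<in> Ins)) \<and>
     card {l \<in> R \<inter> C. l \<noteq> out} = card R - 1"

text \<open>Determinant of the submatrix with rows R and columns C (some fixed orderings;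
  determined up to sign).\<close>
definition detRC :: "'v::linorder set \<Rightarrow> 'v set \<Rightarrow> ('v \<Rightarrow> 'v \<Rightarrow> real) \<Rightarrow> real" where
  "detRC R C M = det (mat (card R) (card R)
     (\<lambda>(i, j). M (sorted_list_of_set R ! i) (sorted_list_of_set C ! j)))"

end

(*
  Let R and C be the rows and columns of B_s and D = R \<inter> C.  A simple path from an input i to o,
  closed up through the entry -f_{i,I} of the last column, is a transversal of <H>; as the
  Frobenius-Koenig form is block triangular with square diagonal blocks, every transversal
  matches the columns of each diagonal block with its rows.  Since B_s is structural,
  R = D \<union> {r0} and C = D \<union> {c0}, and the matching forces every input-output simple path to enter
  R \<union> C at c0, stay in it until r0 and never return; hence any simple path from c0 to r0 inside
  R \<union> C can be spliced into every input-output path.  So c0 and r0 are absolutely super-simple,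
  L(c0, r0) lies in R \<union> C, and so does L'(c0, r0) because off an input-output path the block
  index of a node is its column-block index and cannot increase along an arrow.
  Full indecomposability of B_s gives the rest.  Deleting one node of D never separates r0 from c0
  inside the block, so no super-simple node lies strictly between them.  By Hall's theorem every
  edge l -> a of B_s lies on a transversal; completed by c0 |-> r0 it permutes R \<union> C, its cycle
  through c0 is a path from c0 to r0, and its cycle through l -> a avoids the input-output path
  rerouted along that path.  Thus a node of D on no simple path is CS-path equivalent to a simple
  one, R \<union> C = L'(c0, r0), and B_s is H(L'(c0, r0)) itself because its columns avoid o.
*)

theory Submission
  imports Defs "HOL-Combinatorics.Cycles" "HOL-Combinatorics.Orbits"
begin

section \<open>Simple paths\<close>

lemma simple_path_iff_successively:
  "simple_path E a b p \<longleftrightarrow>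
     p \<noteq> [] \<and> hd p = a \<and> last p = b \<and> distinct p \<and> successively (\<lambda>x y. (x, y) \<in> E) p"
  unfolding simple_path_def successively_conv_nth by blast

lemma simple_path_Cons:
  assumes "simple_path E b c p" "(a, b) \<in> E" "a \<notin> set p"
  shows "simple_path E a c (a # p)"
  using assms by (auto simp: simple_path_iff_successively successively_Cons)

lemma simple_path_prefix:
  assumes "simple_path E a b (xs @ x # ys)"
  shows "simple_path E a x (xs @ [x])"
proof -
  have "successively (\<lambda>x y. (x, y) \<in> E) ((xs @ [x]) @ ys)" "distinct ((xs @ [x]) @ ys)"
    "hd ((xs @ [x]) @ ys) = a"
    using assms by (auto simp: simple_path_iff_successively)
  then show ?thesis
    by (auto simp: simple_path_iff_successively successively_append_iff hd_append split: if_splits)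
qed

lemma simple_path_infix:
  assumes "simple_path E a b (xs @ m @ ys)" "m \<noteq> []"
  shows "simple_path E (hd m) (last m) m"
  using assms by (auto simp: simple_path_iff_successively successively_append_iff)

lemma simple_path_replace_infix:
  assumes "simple_path E a b (xs @ m @ ys)" "m \<noteq> []"
    and "simple_path E (hd m) (last m) Q" "set Q \<inter> set (xs @ ys) = {}"
  shows "simple_path E a b (xs @ Q @ ys)"
proof -
  have "Q \<noteq> []" "hd Q = hd m" "last Q = last m" using assms(3) by (auto simp: simple_path_def)
  then show ?thesis
    using assms
    by (auto simp: simple_path_iff_successively successively_append_iff hd_append last_append)
qed

lemma successively_imp_rtrancl:
  "successively (\<lambda>x y. (x, y) \<in> E) (x # xs) \<Longrightarrow> (x, last (x # xs)) \<in> E\<^sup>*"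
  by (induction xs arbitrary: x) (auto simp: successively_Cons intro: converse_rtrancl_into_rtrancl)

lemma simple_path_rtrancl:
  assumes "simple_path E a b p" "x \<in> set p"
  shows "(a, x) \<in> E\<^sup>*"
proof -
  obtain xs ys where "p = xs @ x # ys" using assms(2) by (meson split_list)
  then have "simple_path E a x (xs @ [x])" using assms(1) simple_path_prefix by metis
  then show ?thesis
    by (metis simple_path_iff_successively successively_imp_rtrancl list.collapse)
qed

lemma simple_path_subset:
  assumes "simple_path E a b p" "E \<subseteq> V \<times> V" "a \<in> V"
  shows "set p \<subseteq> V"
proof
  fix x assume "x \<in> set p"
  with assms(1) have "(a, x) \<in> E\<^sup>*" by (rule simple_path_rtrancl)
  then show "x \<in> V"
  proof (induction rule: rtrancl_induct)
    case (step y z)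
    then show ?case using assms(2) by blast
  qed (rule assms(3))
qed

lemma rtrancl_imp_simple_path:
  assumes "(a, b) \<in> (E \<inter> W \<times> W)\<^sup>*" "a \<in> W"
  obtains p where "simple_path E a b p" "set p \<subseteq> W"
proof -
  from assms(1) have "\<exists>p. simple_path E a b p \<and> set p \<subseteq> W"
  proof (induction rule: rtrancl_induct)
    case base
    then show ?case using assms(2) by (auto simp: simple_path_def intro!: exI[of _ "[a]"])
  next
    case (step y z)
    then obtain p where p: "simple_path E a y p" "set p \<subseteq> W" by blast
    show ?case
    proof (cases "z \<in> set p")
      case True
      then obtain xs ys where split: "p = xs @ z # ys" by (meson split_list)
      then have "simple_path E a z (xs @ [z])" using p(1) by (simp add: simple_path_prefix)
      moreover have "set (xs @ [z]) \<subseteq> W" using p(2) split by auto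
      ultimately show ?thesis by blast
    next
      case False
      then have "simple_path E a z (p @ [z])"
        using p step.hyps(2) by (auto simp: simple_path_iff_successively successively_append_iff)
      then show ?thesis using p(2) step.hyps(2) by (intro exI[of _ "p @ [z]"]) auto
    qed
  qed
  then show thesis using that by blast
qed

lemma distinct_infix_between_iff:
  assumes p: "p = xs @ m @ ys" and "distinct p" "m \<noteq> []"
  shows "(\<exists>x y z. x \<le> y \<and> y \<le> z \<and> z < length p \<and>
            p ! x = hd m \<and> p ! y = v \<and> p ! z = last m) \<longleftrightarrow> v \<in> set m"
    (is "?between \<longleftrightarrow> _")
proof -
  define k where "k = length xs"
  have in_m: "p ! y = m ! (y - k)" if "k \<le> y" "y < k + length m" for y
    using that by (auto simp: p k_def nth_append)
  have "0 < length m" using assms(3) by simp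
  then have "k \<le> k + length m - 1" "k + length m - 1 < k + length m" "k < k + length m"
    by linarith+
  then have hd_at: "p ! k = hd m" and last_at: "p ! (k + length m - 1) = last m"
    using assms(3) in_m by (auto simp: hd_conv_nth last_conv_nth)
  have len: "k + length m \<le> length p" by (simp add: p k_def)
  show ?thesis
  proof
    assume ?between
    then obtain x y z where xyz: "x \<le> y" "y \<le> z" "z < length p"
      "p ! x = hd m" "p ! y = v" "p ! z = last m"
      by blast
    have "x < length p" "k < length p" "k + length m - 1 < length p"
      using xyz len \<open>k < k + length m\<close> by linarith+
    then have "x = k" "z = k + length m - 1"
      using nth_eq_iff_index_eq[OF assms(2)] xyz(3,4,6) hd_at last_at by metis+
    then have "k \<le> y" "y < k + length m" "y - k < length m"
      using xyz \<open>0 < length m\<close> by linarith+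
    then show "v \<in> set m" using xyz(5) in_m[of y] by auto
  next
    assume "v \<in> set m"
    then obtain j where "j < length m" "m ! j = v" by (auto simp: in_set_conv_nth)
    then show ?between
      using hd_at last_at in_m[of "k + j"] len
      by (intro exI[of _ k] exI[of _ "k + j"] exI[of _ "k + length m - 1"]) auto
  qed
qed

lemma before_on_infix_ends:
  assumes "m \<noteq> []" "hd m \<noteq> last m"
  shows "before_on (xs @ m @ ys) (hd m) (last m)"
proof -
  have "1 < length m" using assms by (cases m) auto
  then show ?thesis unfolding before_on_def
    using assms(1)
    by (intro exI[of _ "length xs"] exI[of _ "length xs + length m - 1"])
       (auto simp: nth_append hd_conv_nth last_conv_nth)
qed

lemma successively_propagate:
  assumes "successively (\<lambda>x y. P x \<longrightarrow> P y) xs" "P (hd xs)"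
  shows "\<forall>x\<in>set xs. P x"
proof -
  have "P (xs ! i)" if "i < length xs" for i
    using that
  proof (induction i)
    case 0
    then show ?case using assms(2) by (simp add: hd_conv_nth)
  next
    case (Suc i)
    then show ?case using successively_nth[OF assms(1), of i] by simp
  qed
  then show ?thesis by (auto simp: in_set_conv_nth)
qed

lemma cs_equivI:
  assumes "X \<subseteq> V - set S" "u \<in> X" "v \<in> X"
    and "(u, v) \<in> (E \<inter> X \<times> X)\<^sup>*" "(v, u) \<in> (E \<inter> X \<times> X)\<^sup>*"
  shows "cs_equiv V E S u v"
proof -
  have "(E \<inter> X \<times> X)\<^sup>* \<subseteq> (E \<inter> (V - set S) \<times> (V - set S))\<^sup>*"
    using assms(1) by (intro rtrancl_mono) blast
  then show ?thesis using assms unfolding cs_equiv_def by blast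
qed

lemma cs_equiv_trans:
  "cs_equiv V E S u v \<Longrightarrow> cs_equiv V E S v w \<Longrightarrow> cs_equiv V E S u w"
  unfolding cs_equiv_def by (meson rtrancl_trans)

section \<open>Hall's theorem and fully indecomposable patterns\<close>

definition sdr :: "'i set \<Rightarrow> ('i \<Rightarrow> 'a set) \<Rightarrow> ('i \<Rightarrow> 'a) \<Rightarrow> bool" where
  "sdr I A f \<longleftrightarrow> inj_on f I \<and> (\<forall>i\<in>I. f i \<in> A i)"

definition hall_condition :: "'i set \<Rightarrow> ('i \<Rightarrow> 'a set) \<Rightarrow> bool" where
  "hall_condition I A \<longleftrightarrow> (\<forall>J\<subseteq>I. card J \<le> card (\<Union> (A ` J)))"

lemma hall_conditionD: "hall_condition I A \<Longrightarrow> J \<subseteq> I \<Longrightarrow> card J \<le> card (\<Union> (A ` J))"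
  by (simp add: hall_condition_def)

lemma hall_condition_subset: "hall_condition I A \<Longrightarrow> J \<subseteq> I \<Longrightarrow> hall_condition J A"
  unfolding hall_condition_def by (meson order_trans)

lemma hall_condition_outside_critical:
  assumes fin: "finite I" "\<And>i. i \<in> I \<Longrightarrow> finite (A i)" and hall: "hall_condition I A"
    and J: "J \<subseteq> I" "card (\<Union> (A ` J)) = card J"
  shows "hall_condition (I - J) (\<lambda>i. A i - \<Union> (A ` J))"
  unfolding hall_condition_def
proof (intro allI impI)
  fix K assume K: "K \<subseteq> I - J"
  have finJK: "finite J" "finite K" using fin(1) J(1) K finite_subset by blast+
  have fin_union: "finite (\<Union> (A ` (K \<union> J)))" using fin J(1) K finJK by auto
  have "(\<Union>i\<in>K. A i - \<Union> (A ` J)) = \<Union> (A ` (K \<union> J)) - \<Union> (A ` J)" by auto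
  moreover have "\<Union> (A ` J) \<subseteq> \<Union> (A ` (K \<union> J))" by blast
  ultimately have "card (\<Union>i\<in>K. A i - \<Union> (A ` J)) = card (\<Union> (A ` (K \<union> J))) - card J"
    using card_Diff_subset[OF finite_subset[OF _ fin_union]] J(2) by simp
  moreover have "card (K \<union> J) = card K + card J" using finJK K by (intro card_Un_disjoint) auto
  moreover have "card (K \<union> J) \<le> card (\<Union> (A ` (K \<union> J)))"
    using J(1) K by (intro hall_conditionD[OF hall]) blast
  ultimately show "card K \<le> card (\<Union>i\<in>K. A i - \<Union> (A ` J))" by linarith
qed

lemma hall_condition_remove_one:
  assumes fin: "finite I" "\<And>i. i \<in> I \<Longrightarrow> finite (A i)" and hall: "hall_condition I A"
    and no_critical: "\<not> (\<exists>J. J \<subseteq> I \<and> J \<noteq> {} \<and> J \<noteq> I \<and> card (\<Union> (A ` J)) = card J)"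
    and "i0 \<in> I"
  shows "hall_condition (I - {i0}) (\<lambda>i. A i - {y})"
  unfolding hall_condition_def
proof (intro allI impI)
  fix K assume K: "K \<subseteq> I - {i0}"
  show "card K \<le> card (\<Union>i\<in>K. A i - {y})"
  proof (cases "K = {}")
    case False
    have "card (\<Union> (A ` K)) \<noteq> card K" using no_critical K False \<open>i0 \<in> I\<close> by blast
    moreover have "card K \<le> card (\<Union> (A ` K))" using K by (intro hall_conditionD[OF hall]) blast
    ultimately have "card K < card (\<Union> (A ` K))" by linarith
    moreover have "finite (\<Union> (A ` K))" using fin K finite_subset[of K I] by auto
    moreover have "(\<Union>i\<in>K. A i - {y}) = \<Union> (A ` K) - {y}" by auto
    ultimately show ?thesis by (auto simp: card_Diff_singleton_if)
  qed simp
qed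

lemma inj_on_fun_upd_extend:
  assumes "inj_on f (A - {x})" "y \<notin> f ` (A - {x})"
  shows "inj_on (f(x := y)) A"
proof -
  have "inj_on (f(x := y)) (insert x (A - {x}))"
    using assms unfolding inj_on_insert by (auto intro: inj_on_fun_updI)
  then show ?thesis by (rule inj_on_subset) blast
qed

lemma sdr_combine:
  assumes f: "sdr J A f" and g: "sdr (I - J) (\<lambda>i. A i - \<Union> (A ` J)) g"
  shows "sdr I A (\<lambda>i. if i \<in> J then f i else g i)"
proof -
  have inj: "inj_on f J" "inj_on g (I - J)" using f g by (simp_all add: sdr_def)
  have cross: "f i \<noteq> g j" if "i \<in> J" "j \<in> I - J" for i j
    using f g that unfolding sdr_def by auto
  have "inj_on (\<lambda>i. if i \<in> J then f i else g i) I"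
  proof (rule inj_onI)
    fix i j assume ij: "i \<in> I" "j \<in> I"
      and eq: "(if i \<in> J then f i else g i) = (if j \<in> J then f j else g j)"
    show "i = j"
    proof (cases "i \<in> J"; cases "j \<in> J")
      assume "i \<in> J" "j \<in> J" then show ?thesis using eq inj(1) by (simp add: inj_on_eq_iff)
    next
      assume "i \<notin> J" "j \<notin> J" then show ?thesis using eq inj(2) ij by (simp add: inj_on_eq_iff)
    next
      assume "i \<in> J" "j \<notin> J" then show ?thesis using eq cross[of i j] ij by simp
    next
      assume "i \<notin> J" "j \<in> J" then show ?thesis using eq cross[of j i] ij by simp
    qed
  qed
  then show ?thesis using f g by (auto simp: sdr_def)
qed

lemma sdr_fun_upd:
  assumes g: "sdr (I - {i0}) (\<lambda>i. A i - {y}) g" and "y \<in> A i0"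
  shows "sdr I A (g(i0 := y))"
proof -
  have "y \<notin> g ` (I - {i0})" using g by (auto simp: sdr_def)
  with g have "inj_on (g(i0 := y)) I" unfolding sdr_def by (blast intro: inj_on_fun_upd_extend)
  then show ?thesis using g \<open>y \<in> A i0\<close> by (auto simp: sdr_def)
qed

lemma card_proper_subset_and_complement_less:
  assumes "finite I" "J \<subseteq> I" "J \<noteq> {}" "J \<noteq> I"
  shows "card J < card I" "card (I - J) < card I"
proof -
  show "card J < card I" using assms by (intro psubset_card_mono) auto
  moreover have "finite J" using assms(1,2) by (rule finite_subset[rotated])
  then have "card (I - J) = card I - card J" "0 < card J"
    using assms(2,3) by (simp_all add: card_Diff_subset card_gt_0_iff)
  ultimately show "card (I - J) < card I" by linarith
qed

theorem hall_marriage: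
  assumes "finite I" "\<And>i. i \<in> I \<Longrightarrow> finite (A i)" "hall_condition I A"
  shows "\<exists>f. sdr I A f"
  using assms
proof (induction "card I" arbitrary: I A rule: less_induct)
  case less
  consider "I = {}"
    | J where "J \<subseteq> I" "J \<noteq> {}" "J \<noteq> I" "card (\<Union> (A ` J)) = card J"
    | "I \<noteq> {}" "\<not> (\<exists>J. J \<subseteq> I \<and> J \<noteq> {} \<and> J \<noteq> I \<and> card (\<Union> (A ` J)) = card J)"
    by blast
  then show ?case
  proof cases
    case 1
    then show ?thesis by (auto simp: sdr_def)
  next
    case (2 J)
    note card_less = card_proper_subset_and_complement_less[OF less.prems(1) 2(1-3)]
    have "finite J" using 2(1) less.prems(1) finite_subset by blast
    have "\<exists>f. sdr J A f"
    proof (rule less.hyps[OF card_less(1) \<open>finite J\<close>])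
      show "finite (A i)" if "i \<in> J" for i using that 2(1) less.prems(2) by blast
    qed (rule hall_condition_subset[OF less.prems(3) 2(1)])
    then obtain f where "sdr J A f" by blast
    moreover have "\<exists>g. sdr (I - J) (\<lambda>i. A i - \<Union> (A ` J)) g"
    proof (rule less.hyps[OF card_less(2)])
      show "finite (A i - \<Union> (A ` J))" if "i \<in> I - J" for i using less.prems(2) that by simp
    qed (use less.prems(1) hall_condition_outside_critical[OF less.prems 2(1,4)] in auto)
    then obtain g where "sdr (I - J) (\<lambda>i. A i - \<Union> (A ` J)) g" by blast
    ultimately have "sdr I A (\<lambda>i. if i \<in> J then f i else g i)" by (rule sdr_combine)
    then show ?thesis by blast
  next
    case 3
    then obtain i0 where i0: "i0 \<in> I" by blast
    then have "A i0 \<noteq> {}" using hall_conditionD[OF less.prems(3), of "{i0}"] by auto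
    then obtain y where y: "y \<in> A i0" by blast
    have "\<exists>g. sdr (I - {i0}) (\<lambda>i. A i - {y}) g"
    proof (rule less.hyps)
      show "card (I - {i0}) < card I" using less.prems(1) i0 by (rule card_Diff1_less)
      show "finite (A i - {y})" if "i \<in> I - {i0}" for i using less.prems(2) that by simp
      show "hall_condition (I - {i0}) (\<lambda>i. A i - {y})"
        using less.prems 3(2) i0 by (rule hall_condition_remove_one)
    qed (use less.prems(1) in simp)
    then obtain g where "sdr (I - {i0}) (\<lambda>i. A i - {y}) g" by blast
    then have "sdr I A (g(i0 := y))" using y by (rule sdr_fun_upd)
    then show ?thesis by blast
  qed
qed

lemma fully_indecomposableD:
  assumes "fully_indecomposable Z R C"
  shows "card R = card C" "R \<noteq> {}"
    and "\<And>S T. S \<subseteq> R \<Longrightarrow> T \<subseteq> C \<Longrightarrow> S \<noteq> {} \<Longrightarrow> T \<noteq> {} \<Longrightarrow>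
           card R \<le> card S + card T \<Longrightarrow> \<exists>j\<in>S. \<exists>l\<in>T. Z j l"
  using assms by (simp_all add: fully_indecomposable_def)

lemma fully_indecomposable_hall_condition:
  assumes FI: "fully_indecomposable Z R C" and "finite C" and "a \<in> R" "l \<in> C"
  shows "hall_condition (R - {a}) (\<lambda>x. {y \<in> C - {l}. Z x y})"
  unfolding hall_condition_def
proof (intro allI impI)
  fix J assume J: "J \<subseteq> R - {a}"
  define N where "N = {y \<in> C. \<exists>x\<in>J. Z x y}"
  have union: "(\<Union>x\<in>J. {y \<in> C - {l}. Z x y}) = N - {l}" by (auto simp: N_def)
  have finN: "finite N" "N \<subseteq> C" using \<open>finite C\<close> by (auto simp: N_def)
  have cardR: "card R = card C" using FI by (rule fully_indecomposableD)
  have "0 < card C" using \<open>l \<in> C\<close> \<open>finite C\<close> by (auto simp: card_gt_0_iff)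
  then have "finite R" using cardR by (intro card_ge_0_finite) simp
  then have "card J \<le> card (R - {a})" using J by (intro card_mono) auto
  then have cardJ: "card J \<le> card R - 1" using \<open>a \<in> R\<close> by simp
  have "card J \<le> card N - 1"
  proof (cases "J = {} \<or> N = C")
    case True
    then show ?thesis using cardJ cardR by auto
  next
    case False
    then have "\<not> (\<exists>j\<in>J. \<exists>y\<in>C - N. Z j y)" "J \<noteq> {}" "C - N \<noteq> {}"
      using finN(2) by (auto simp: N_def)
    then have "\<not> card R \<le> card J + card (C - N)"
      using fully_indecomposableD(3)[OF FI, of J "C - N"] J by blast
    moreover have "card (C - N) = card C - card N" "card N \<le> card C"
      using finN \<open>finite C\<close> by (auto simp: card_Diff_subset card_mono)
    ultimately show ?thesis using cardR by linarith
  qed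
  then show "card J \<le> card (\<Union>x\<in>J. {y \<in> C - {l}. Z x y})"
    unfolding union using finN by (auto simp: card_Diff_singleton_if)
qed

lemma fully_indecomposable_entry_on_transversal:
  assumes FI: "fully_indecomposable Z R C" and "finite C"
    and "a \<in> R" "l \<in> C" "Z a l"
  obtains \<sigma> where "bij_betw \<sigma> R C" "\<And>x. x \<in> R \<Longrightarrow> Z x (\<sigma> x)" "\<sigma> a = l"
proof -
  have cardR: "card R = card C" using FI by (rule fully_indecomposableD)
  have "0 < card C" using \<open>l \<in> C\<close> \<open>finite C\<close> by (auto simp: card_gt_0_iff)
  then have "finite R" using cardR by (intro card_ge_0_finite) simp
  then have "\<exists>f. sdr (R - {a}) (\<lambda>x. {y \<in> C - {l}. Z x y}) f"
    using fully_indecomposable_hall_condition[OF FI \<open>finite C\<close> \<open>a \<in> R\<close> \<open>l \<in> C\<close>] \<open>finite C\<close>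
    by (intro hall_marriage) auto
  then obtain f where f: "inj_on f (R - {a})" "\<forall>x\<in>R - {a}. f x \<in> {y \<in> C - {l}. Z x y}"
    unfolding sdr_def by blast
  define \<sigma> where "\<sigma> = f(a := l)"
  have "l \<notin> f ` (R - {a})" using f(2) by blast
  with f(1) have "inj_on \<sigma> R" unfolding \<sigma>_def by (rule inj_on_fun_upd_extend)
  moreover have "\<sigma> ` R \<subseteq> C" using f \<open>l \<in> C\<close> by (auto simp: \<sigma>_def)
  ultimately have "bij_betw \<sigma> R C"
    using cardR \<open>finite C\<close> by (simp add: bij_betw_def card_image card_subset_eq)
  moreover have "\<forall>x\<in>R. Z x (\<sigma> x)" using f \<open>Z a l\<close> by (auto simp: \<sigma>_def)
  ultimately show thesis using that by (simp add: \<sigma>_def)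
qed

section \<open>Transversals of a block triangular pattern\<close>

lemma sum_eq_if_equal_fibre_cards:
  fixes f g :: "'a \<Rightarrow> nat"
  assumes "finite V" "\<And>v. v \<in> V \<Longrightarrow> f v < q \<and> g v < q"
    and "\<And>i. i < q \<Longrightarrow> card {v \<in> V. f v = i} = card {v \<in> V. g v = i}"
  shows "sum f V = sum g V"
proof -
  have by_value: "sum h V = (\<Sum>i<q. i * card {v \<in> V. h v = i})" if "\<forall>v\<in>V. h v < q"
    for h :: "'a \<Rightarrow> nat"
  proof -
    have "sum h V = (\<Sum>v\<in>V. \<Sum>i<q. if h v = i then i else 0)"
      using that by (intro sum.cong) (auto simp: sum.delta')
    also have "\<dots> = (\<Sum>i<q. \<Sum>v\<in>V. if h v = i then i else 0)" by (rule sum.swap)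
    also have "\<dots> = (\<Sum>i<q. i * card {v \<in> V. h v = i})"
      using \<open>finite V\<close> by (intro sum.cong) (auto simp: sum.inter_filter[symmetric])
    finally show ?thesis .
  qed
  show ?thesis using assms by (simp add: by_value)
qed

lemma fk_decompositionD:
  assumes "fk_decomposition V Z q rb cb"
  shows "\<And>v. v \<in> V \<Longrightarrow> rb v < q \<and> cb v < q"
    and "\<And>i. i < q \<Longrightarrow> fully_indecomposable Z {v \<in> V. rb v = i} {v \<in> V. cb v = i}"
    and "\<And>j l. j \<in> V \<Longrightarrow> l \<in> V \<Longrightarrow> Z j l \<Longrightarrow> rb j \<le> cb l"
  using assms unfolding fk_decomposition_def by (blast, blast, meson not_le)

lemma fk_decomposition_transversal:
  assumes fk: "fk_decomposition V Z q rb cb" and "finite V"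
    and \<pi>: "\<pi> permutes V" "\<And>l. l \<in> V \<Longrightarrow> Z (\<pi> l) l" and "l \<in> V"
  shows "rb (\<pi> l) = cb l"
proof -
  have le: "rb (\<pi> l) \<le> cb l" if "l \<in> V" for l
    using fk_decompositionD(3)[OF fk] \<pi> that permutes_in_image[OF \<pi>(1)] by blast
  have "sum (rb \<circ> \<pi>) V = sum rb V" using \<pi>(1) by (rule sum.permute[symmetric])
  also have "\<dots> = sum cb V"
  proof (rule sum_eq_if_equal_fibre_cards)
    show "card {v \<in> V. rb v = i} = card {v \<in> V. cb v = i}" if "i < q" for i
      using fk_decompositionD(2)[OF fk that] by (rule fully_indecomposableD)
  qed (use \<open>finite V\<close> fk_decompositionD(1)[OF fk] in auto)
  finally have "sum (rb \<circ> \<pi>) V = sum cb V" .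
  then show ?thesis using sum_mono_inv[of "rb \<circ> \<pi>" V cb l] le \<open>l \<in> V\<close> \<open>finite V\<close> by simp
qed

lemma cycle_of_list_nth:
  assumes "distinct cs" "t < length cs"
  shows "cycle_of_list cs (cs ! t) = cs ! (Suc t mod length cs)"
proof -
  have "map (cycle_of_list cs) cs = rotate1 cs" using cyclic_rotation[OF assms(1), of 1] by simp
  then have "cycle_of_list cs (cs ! t) = rotate1 cs ! t" using assms(2) by (metis nth_map)
  then show ?thesis using assms(2) by (simp add: nth_rotate1)
qed

lemma input_path_transversal:
  assumes core: "core_network V E Ins out" and fk: "fk_decomposition V (hH_nz E Ins out) q rb cb"
    and p: "i \<in> Ins" "simple_path E i out p" and "l \<in> V"
  shows "rb (cycle_of_list p l) = cb l"
proof (rule fk_decomposition_transversal[OF fk])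
  have "E \<subseteq> V \<times> V" "i \<in> V" using core p(1) unfolding core_network_def by auto
  with p(2) have pV: "set p \<subseteq> V" by (rule simple_path_subset)
  show "finite V" using core unfolding core_network_def by simp
  show "cycle_of_list p permutes V" using cycle_permutes pV by (rule permutes_subset)
  show "l \<in> V" by fact
  have p_facts: "p \<noteq> []" "hd p = i" "last p = out" "distinct p"
    using p(2) unfolding simple_path_def by auto
  show "hH_nz E Ins out (cycle_of_list p v) v" if "v \<in> V" for v
  proof (cases "v \<in> set p")
    case False
    then have "v \<noteq> out" using p_facts by auto
    then show ?thesis using False by (simp add: id_outside_supp hH_nz_def)
  next
    case True
    then obtain t where t: "t < length p" "p ! t = v" by (auto simp: in_set_conv_nth)
    show ?thesis
    proof (cases "Suc t < length p")
      case True
      have "p ! t \<noteq> out"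
        using p_facts t True nth_eq_iff_index_eq[of p t "length p - 1"]
        by (auto simp: last_conv_nth)
      moreover have "(p ! t, p ! Suc t) \<in> E" using p(2) True unfolding simple_path_def by blast
      ultimately show ?thesis
        using cycle_of_list_nth[OF p_facts(4) t(1)] True t(2) by (simp add: hH_nz_def)
    next
      case False
      then have "t = length p - 1" using t(1) by simp
      then have "v = out" "cycle_of_list p v = i"
        using cycle_of_list_nth[OF p_facts(4) t(1)] p_facts t(2)
        by (auto simp: last_conv_nth hd_conv_nth)
      then show ?thesis using p(1) by (simp add: hH_nz_def)
    qed
  qed
qed

section \<open>Cycles of a permutation as paths\<close>

lemma successively_upt:
  "successively P [m..<n] \<longleftrightarrow> (\<forall>i. m \<le> i \<longrightarrow> Suc i < n \<longrightarrow> P i (Suc i))"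
proof -
  have "successively P [m..<n] \<longleftrightarrow> (\<forall>j. Suc (j + m) < n \<longrightarrow> P (m + j) (Suc (m + j)))"
    by (simp add: successively_conv_nth less_diff_conv)
  also have "\<dots> \<longleftrightarrow> (\<forall>i. m \<le> i \<longrightarrow> Suc i < n \<longrightarrow> P i (Suc i))"
  proof (intro iffI allI impI)
    fix i assume "\<forall>j. Suc (j + m) < n \<longrightarrow> P (m + j) (Suc (m + j))" "m \<le> i" "Suc i < n"
    then show "P i (Suc i)" by (metis le_add_diff_inverse le_add_diff_inverse2)
  qed auto
  finally show ?thesis .
qed

lemma simple_path_rev_map_upt:
  assumes "m < n" "inj_on g {m..<n}" "\<And>i. m \<le> i \<Longrightarrow> Suc i < n \<Longrightarrow> (g (Suc i), g i) \<in> E"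
  shows "simple_path E (g (n - 1)) (g m) (rev (map g [m..<n]))"
  unfolding simple_path_iff_successively
  using assms
  by (simp add: hd_rev last_rev last_map hd_map hd_upt distinct_map
    successively_map successively_upt)

lemma orbit_simple_path:
  assumes "permutation f" "f x \<noteq> x"
    and edge: "\<And>y. y \<in> orbit f x \<Longrightarrow> y \<noteq> x \<Longrightarrow> f y \<noteq> y \<Longrightarrow> (f y, y) \<in> E"
  obtains Q where "simple_path E x (f x) Q" "set Q = orbit f x"
proof -
  define P where "P = funpow_dist1 f x x"
  define g where "g n = (f ^^ n) x" for n
  have x_in: "x \<in> orbit f x" using assms(1) by (rule permutation_self_in_orbit)
  have period: "g P = x" unfolding P_def g_def using x_in by (rule funpow_dist1_prop)
  have other: "g n \<noteq> x" if "0 < n" "n < P" for n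
    using funpow_dist1_least[OF that(1) that(2)[unfolded P_def]] by (simp add: g_def)
  have "P \<noteq> 1" using period assms(2) by (auto simp: g_def)
  then have P: "2 \<le> P" by (simp add: P_def)
  have step: "(g (Suc n), g n) \<in> E" if "0 < n" "n < P" for n
  proof -
    have "g n \<in> orbit f x" unfolding g_def using x_in by (rule funpow_in_orbit)
    moreover have "f (g n) \<noteq> g n"
      using orbit_swap[OF x_in \<open>g n \<in> orbit f x\<close>] orbit_eq_singleton_iff[of f "g n"] other[OF that]
      by auto
    ultimately show ?thesis using edge other[OF that] by (simp add: g_def)
  qed
  have "inj_on g {1..<P}"
    using inj_on_funpow_dist1[OF x_in] unfolding P_def g_def by (rule inj_on_subset) auto
  then have "simple_path E (g (P - 1)) (g 1) (rev (map g [1..<P]))"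
    using P step by (intro simple_path_rev_map_upt) auto
  moreover have "(x, g (P - 1)) \<in> E" "g 1 = f x"
    using step[of "P - 1"] period P by (simp_all add: g_def)
  moreover have "x \<notin> g ` {1..<P}"
  proof
    assume "x \<in> g ` {1..<P}"
    then obtain n where "n \<in> {1..<P}" "x = g n" by (rule imageE)
    then show False using other[of n] by simp
  qed
  ultimately have path: "simple_path E x (f x) (x # rev (map g [1..<P]))"
    by (auto intro: simple_path_Cons)
  have "set (x # rev (map g [1..<P])) = g ` insert 0 {1..<P}" by (simp add: g_def)
  also have "insert 0 {1..<P} = {0..<P}" using P by auto
  also have "g ` {0..<P} = orbit f x"
    unfolding g_def P_def by (rule orbit_conv_funpow_dist1[OF x_in, symmetric])
  finally show thesis by (rule that[OF path])
qed

lemma orbit_strongly_connected: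
  assumes "permutation f"
    and edge: "\<And>y. y \<in> orbit f x \<Longrightarrow> f y \<noteq> y \<Longrightarrow> (f y, y) \<in> E"
    and "y \<in> orbit f x" "z \<in> orbit f x"
  shows "(y, z) \<in> (E \<inter> orbit f x \<times> orbit f x)\<^sup>*"
proof -
  have "orbit f z = orbit f x"
    using cyclic_on_orbit'[OF assms(1)] assms(4) by (rule orbit_cyclic_eq3)
  then obtain n where y: "y = (f ^^ n) z" using assms(3)
    by (auto simp: orbit_altdef_permutation[OF assms(1)])
  have "((f ^^ n) z, z) \<in> (E \<inter> orbit f x \<times> orbit f x)\<^sup>*" for n
  proof (induction n)
    case (Suc n)
    have "(f ^^ n) z \<in> orbit f x" using assms(4) by (simp add: funpow_in_orbit)
    then have "f ((f ^^ n) z) = (f ^^ n) z \<or>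
        (f ((f ^^ n) z), (f ^^ n) z) \<in> E \<inter> orbit f x \<times> orbit f x"
      using edge by (auto intro: orbit.step)
    with Suc.IH show ?case by (auto intro: converse_rtrancl_into_rtrancl)
  qed simp
  then show ?thesis using y by simp
qed

section \<open>The structural block\<close>

text \<open>\<open>R\<close> and \<open>C\<close> are the rows and columns of the block \<open>B\<^sub>s\<close>; \<open>r0\<close> and \<open>c0\<close> turn out to be
  its only row outside \<open>C\<close> and its only column outside \<open>R\<close>, and they are the adjacent
  super-simple nodes \<open>\<rho>\<^sub>k = c0\<close> and \<open>\<rho>\<^bsub>k+1\<^esub> = r0\<close> of the theorem.\<close>

locale structural_homeostasis_block =
  fixes V :: "'v set" and E :: "('v \<times> 'v) set" and Ins :: "'v set" and out :: 'v
    and q s :: nat and rb cb :: "'v \<Rightarrow> nat"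
    and R C D :: "'v set" and r0 c0 :: 'v
  defines R_def: "R \<equiv> {v \<in> V. rb v = s}" and C_def: "C \<equiv> {v \<in> V. cb v = s}"
    and D_def: "D \<equiv> R \<inter> C"
    and r0_def: "r0 \<equiv> the_elem (R - C)" and c0_def: "c0 \<equiv> the_elem (C - R)"
  assumes core: "core_network V E Ins out"
    and two_inputs: "card Ins \<ge> 2"
    and fk: "fk_decomposition V (hH_nz E Ins out) q rb cb"
    and block: "s < q"
    and structural: "structural_block Ins out R C"
begin

abbreviation L where "L \<equiv> L_set V E Ins out c0 r0"
abbreviation L' where "L' \<equiv> L'_set V E Ins out c0 r0"

lemma finite_V: "finite V" and E_subset: "E \<subseteq> V \<times> V" and Ins_subset: "Ins \<subseteq> V"
  and out_in_V: "out \<in> V" and reaches_out: "\<And>v. v \<in> V \<Longrightarrow> (v, out) \<in> E\<^sup>*"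
  using core unfolding core_network_def by auto

lemma Ins_nonempty: "Ins \<noteq> {}"
  using two_inputs by auto

lemma block_fully_indecomposable: "fully_indecomposable (hH_nz E Ins out) R C"
  unfolding R_def C_def using fk_decompositionD(2)[OF fk block] .

lemma card_R_C: "card R = card C" and R_nonempty: "R \<noteq> {}"
  using block_fully_indecomposable by (rule fully_indecomposableD)+

lemma finite_R: "finite R" and finite_C: "finite C"
  using finite_V by (simp_all add: R_def C_def)

lemma out_notin_C: "out \<notin> C"
proof
  assume "out \<in> C"
  then have no_input_row: "R \<inter> Ins = {}"
    using structural unfolding structural_block_def by blast
  obtain j where "j \<in> R" "hH_nz E Ins out j out"
    using fully_indecomposableD(3)[OF block_fully_indecomposable, of R "{out}"] \<open>out \<in> C\<close> R_nonempty
    by auto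
  then show False using no_input_row by (auto simp: hH_nz_def)
qed

lemma card_D: "card D = card R - 1"
proof -
  have "{l \<in> R \<inter> C. l \<noteq> out} = D" using out_notin_C by (auto simp: D_def)
  then show ?thesis using structural unfolding structural_block_def by simp
qed

lemma R_minus_C: "R - C = {r0}" and C_minus_R: "C - R = {c0}"
proof -
  have "card R > 0" using finite_R R_nonempty by (simp add: card_gt_0_iff)
  then have "card (R - C) = 1" "card (C - R) = 1"
    using card_D card_R_C finite_R finite_C
    by (simp_all add: D_def card_Diff_subset_Int Int_commute)
  then obtain x y where "R - C = {x}" "C - R = {y}" by (meson card_1_singletonE)
  then show "R - C = {r0}" "C - R = {c0}" unfolding r0_def c0_def by simp_all
qed

lemma r0_in_R: "r0 \<in> R" and r0_notin_C: "r0 \<notin> C"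
  and c0_in_C: "c0 \<in> C" and c0_notin_R: "c0 \<notin> R"
  using R_minus_C C_minus_R by blast+

lemma R_eq: "R = insert r0 D" and C_eq: "C = insert c0 D"
  using R_minus_C C_minus_R unfolding D_def by blast+

lemma c0_neq_r0: "c0 \<noteq> r0"
  using c0_in_C r0_notin_C by metis

lemma block_union: "R \<union> C = insert c0 (insert r0 D)"
  unfolding R_eq C_eq by (simp add: insert_commute)

lemma eq_r0I: "x \<in> R \<Longrightarrow> x \<notin> C \<Longrightarrow> x = r0"
  using R_minus_C by (metis Diff_iff singletonD)

lemma eq_c0I: "x \<in> C \<Longrightarrow> x \<notin> R \<Longrightarrow> x = c0"
  using C_minus_R by (metis Diff_iff singletonD)

lemma D_subset_V: "D \<subseteq> V"
  unfolding D_def R_def by blast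

lemma block_node_in_D: "x \<in> R \<union> C \<Longrightarrow> x \<noteq> c0 \<Longrightarrow> x \<noteq> r0 \<Longrightarrow> x \<in> D"
  using block_union by blast

lemma D_subset_R: "D \<subseteq> R" and D_subset_C: "D \<subseteq> C"
  unfolding D_def by (rule Int_lower1, rule Int_lower2)

lemma c0_notin_D: "c0 \<notin> D" and r0_notin_D: "r0 \<notin> D"
  using c0_notin_R r0_notin_C D_subset_R D_subset_C by blast+

lemma finite_D: "finite D"
  using finite_subset[OF D_subset_R finite_R] .

lemma edge_into_block_rows:
  assumes Y: "Y \<subseteq> D" and S: "S \<subseteq> R - Y" "S \<noteq> {}" and card: "card D \<le> card S + card Y"
  obtains l j where "l \<in> insert c0 Y" "j \<in> S" "(l, j) \<in> E"
proof -
  have c0_Y: "c0 \<notin> Y" using Y D_subset_R c0_notin_R by blast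
  have "finite Y" using finite_subset[OF Y finite_D] .
  then have card_T: "card (insert c0 Y) = card Y + 1" using c0_Y by simp
  have T_C: "insert c0 Y \<subseteq> C" using c0_in_C Y D_subset_C by blast
  have "card R = card D + 1" using card_D finite_R R_nonempty by (simp add: card_gt_0_iff)
  then have "card R \<le> card S + card (insert c0 Y)" using card card_T by linarith
  moreover have "S \<subseteq> R" using S(1) by blast
  ultimately obtain j l where jl: "j \<in> S" "l \<in> insert c0 Y" "hH_nz E Ins out j l"
    using fully_indecomposableD(3)[OF block_fully_indecomposable, of S "insert c0 Y"] S(2) T_C
    by blast
  have "l \<noteq> out" using jl(2) T_C out_notin_C by blast
  moreover have "l \<noteq> j" using jl(1,2) S(1) c0_notin_R by blast
  ultimately have "(l, j) \<in> E" using jl(3) by (simp add: hH_nz_def)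
  with jl(2,1) show thesis by (rule that)
qed

lemma input_path_exists:
  assumes "i \<in> Ins"
  obtains p where "simple_path E i out p"
proof -
  have "i \<in> V" using assms Ins_subset by blast
  moreover have "E \<inter> V \<times> V = E" using E_subset by blast
  ultimately have "(i, out) \<in> (E \<inter> V \<times> V)\<^sup>*" using reaches_out by simp
  then obtain p where p: "simple_path E i out p" "set p \<subseteq> V"
    using \<open>i \<in> V\<close> by (rule rtrancl_imp_simple_path)
  from p(1) show thesis by (rule that)
qed

lemma input_path_subset:
  assumes "i \<in> Ins" "simple_path E i out p"
  shows "set p \<subseteq> V"
  using assms(2) E_subset by (rule simple_path_subset) (use assms(1) Ins_subset in blast)

lemma input_path_rb_cb:
  assumes p: "i \<in> Ins" "simple_path E i out p"
  shows input_path_off_rb_cb: "\<And>v. v \<in> V \<Longrightarrow> v \<notin> set p \<Longrightarrow> rb v = cb v"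
    and input_path_hd_rb: "rb (hd p) = cb out"
    and input_path_successively_rb_cb: "successively (\<lambda>x y. rb y = cb x) p"
proof -
  note transversal = input_path_transversal[OF core fk p]
  have p_facts: "p \<noteq> []" "hd p = i" "last p = out" "distinct p"
    using p(2) unfolding simple_path_def by auto
  have pV: "set p \<subseteq> V" using p by (rule input_path_subset)
  show "rb v = cb v" if "v \<in> V" "v \<notin> set p" for v
    using transversal[OF that(1)] that(2) by (simp add: id_outside_supp)
  have "cycle_of_list p out = hd p"
    using cycle_of_list_nth[OF p_facts(4), of "length p - 1"] p_facts
    by (simp add: last_conv_nth hd_conv_nth)
  then show "rb (hd p) = cb out" using transversal[OF out_in_V] by simp
  show "successively (\<lambda>x y. rb y = cb x) p"
    unfolding successively_conv_nth
  proof (intro allI impI)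
    fix t assume t: "Suc t < length p"
    then have "p ! t \<in> V" using pV by (simp add: subset_iff)
    then show "rb (p ! Suc t) = cb (p ! t)"
      using transversal[OF \<open>p ! t \<in> V\<close>] cycle_of_list_nth[OF p_facts(4), of t] t by simp
  qed
qed

lemma input_path_block_run:
  assumes p: "i \<in> Ins" "simple_path E i out p"
  shows "successively (\<lambda>x y. y \<in> R \<longleftrightarrow> x \<in> C) p" "hd p \<notin> R"
proof -
  have "set p \<subseteq> V" using p by (rule input_path_subset)
  then show "successively (\<lambda>x y. y \<in> R \<longleftrightarrow> x \<in> C) p"
    using successively_mono[OF input_path_successively_rb_cb[OF p]]
    by (auto simp: R_def C_def subset_iff)
  show "hd p \<notin> R" using input_path_hd_rb[OF p] out_notin_C out_in_V by (simp add: R_def C_def)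
qed

lemma input_path_meets_c0_r0:
  assumes p: "i \<in> Ins" "simple_path E i out p"
  shows "c0 \<in> set p" "r0 \<in> set p"
proof -
  have "v \<in> set p" if "v \<in> V" "rb v \<noteq> cb v" for v
    using input_path_off_rb_cb[OF p that(1)] that(2) by blast
  then show "c0 \<in> set p" "r0 \<in> set p"
    using c0_in_C c0_notin_R r0_in_R r0_notin_C by (simp_all add: R_def C_def)
qed

lemma run_outside_block:
  assumes "successively (\<lambda>x y. y \<in> R \<longleftrightarrow> x \<in> C) l" "c0 \<notin> set l" "hd l \<notin> R \<union> C"
  shows "set l \<inter> (R \<union> C) = {}"
proof -
  have "successively (\<lambda>x y. x \<notin> R \<union> C \<longrightarrow> y \<notin> R \<union> C) l"
  proof (rule successively_mono[OF assms(1)])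
    fix x y assume "y \<in> set l" "(y \<in> R) = (x \<in> C)"
    then show "x \<notin> R \<union> C \<longrightarrow> y \<notin> R \<union> C" using assms(2) eq_c0I by blast
  qed
  then have "\<forall>x\<in>set l. x \<notin> R \<union> C" using assms(3) by (rule successively_propagate)
  then show ?thesis by blast
qed

lemma run_inside_C:
  assumes "successively (\<lambda>x y. y \<in> R \<longleftrightarrow> x \<in> C) l" "r0 \<notin> set l" "hd l \<in> C"
  shows "set l \<subseteq> C"
proof -
  have "successively (\<lambda>x y. x \<in> C \<longrightarrow> y \<in> C) l"
  proof (rule successively_mono[OF assms(1)])
    fix x y assume "y \<in> set l" "(y \<in> R) = (x \<in> C)"
    then show "x \<in> C \<longrightarrow> y \<in> C" using assms(2) eq_r0I by blast
  qed
  then have "\<forall>x\<in>set l. x \<in> C" using assms(3) by (rule successively_propagate)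
  then show ?thesis by blast
qed

lemma input_path_block_segment:
  assumes p: "i \<in> Ins" "simple_path E i out p"
  obtains xs m ys where "p = xs @ m @ ys" "m \<noteq> []" "hd m = c0" "last m = r0"
    "set m \<subseteq> R \<union> C" "set (xs @ ys) \<inter> (R \<union> C) = {}"
proof -
  have dist: "distinct p" using p(2) by (simp add: simple_path_def)
  note run = input_path_block_run[OF p]
  obtain xs zs where p_xs: "p = xs @ c0 # zs"
    using input_path_meets_c0_r0(1)[OF p] by (meson split_list)
  have xs: "set xs \<inter> (R \<union> C) = {}"
  proof (cases "xs = []")
    case False
    have "hd xs \<notin> R \<union> C" using run(2) False dist eq_c0I p_xs by auto
    then show ?thesis
      using run_outside_block run(1) dist p_xs by (simp add: successively_append_iff)
  qed simp
  have "r0 \<in> set zs" using input_path_meets_c0_r0(2)[OF p] r0_in_R xs c0_neq_r0 p_xs by auto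
  then obtain ms ys where zs: "zs = ms @ r0 # ys" by (meson split_list)
  have run': "successively (\<lambda>x y. y \<in> R \<longleftrightarrow> x \<in> C) (c0 # ms)"
    "successively (\<lambda>x y. y \<in> R \<longleftrightarrow> x \<in> C) (r0 # ys)"
  proof -
    have "successively (\<lambda>x y. y \<in> R \<longleftrightarrow> x \<in> C) (xs @ (c0 # ms) @ (r0 # ys))"
      using run(1) by (simp add: p_xs zs)
    then show "successively (\<lambda>x y. y \<in> R \<longleftrightarrow> x \<in> C) (c0 # ms)"
      "successively (\<lambda>x y. y \<in> R \<longleftrightarrow> x \<in> C) (r0 # ys)"
      unfolding successively_append_iff by simp_all
  qed
  have "set (c0 # ms) \<subseteq> C"
    using run_inside_C[OF run'(1)] dist c0_in_C c0_neq_r0 unfolding p_xs zs by auto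
  moreover have "set ys \<inter> (R \<union> C) = {}"
  proof (cases "ys = []")
    case False
    then have "hd ys \<notin> R" using run'(2) r0_notin_C by (simp add: successively_Cons)
    moreover have "hd ys \<noteq> c0" using hd_in_set[OF False] dist unfolding p_xs zs by auto
    ultimately show ?thesis
      using run_outside_block run'(2) dist eq_c0I unfolding p_xs zs
      by (auto simp: successively_Cons)
  qed simp
  ultimately show thesis
    using xs r0_in_R by (intro that[of xs "c0 # ms @ [r0]" ys]) (auto simp: p_xs zs)
qed

lemma input_path_reroute:
  assumes p: "i \<in> Ins" "simple_path E i out p"
    and Q: "simple_path E c0 r0 Q" "set Q \<subseteq> R \<union> C"
  obtains p' where "simple_path E i out p'" "set p' \<inter> (R \<union> C) = set Q"
proof -
  obtain xs m ys where seg: "p = xs @ m @ ys" "m \<noteq> []" "hd m = c0" "last m = r0"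
    "set m \<subseteq> R \<union> C" "set (xs @ ys) \<inter> (R \<union> C) = {}"
    using p by (rule input_path_block_segment)
  have "set Q \<inter> set (xs @ ys) = {}" using Q(2) seg(6) by blast
  then have "simple_path E i out (xs @ Q @ ys)"
    using simple_path_replace_infix[of E i out xs m ys Q] p(2) seg(1-4) Q(1) by simp
  moreover have "set (xs @ Q @ ys) \<inter> (R \<union> C) = set Q" using Q(2) seg(6) by auto
  ultimately show thesis by (rule that)
qed

lemma input_path_c0_before_r0:
  assumes "i \<in> Ins" "simple_path E i out p"
  shows "before_on p c0 r0"
proof -
  obtain xs m ys where seg: "p = xs @ m @ ys" "m \<noteq> []" "hd m = c0" "last m = r0"
    using assms by (rule input_path_block_segment)
  then show ?thesis using before_on_infix_ends[of m xs ys] c0_neq_r0 by simp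
qed

lemma input_path_between_c0_r0:
  assumes "i \<in> Ins" "simple_path E i out p"
    and "x \<le> y" "y \<le> z" "z < length p" "p ! x = c0" "p ! y = v" "p ! z = r0"
  shows "v \<in> R \<union> C"
proof -
  obtain xs m ys where seg: "p = xs @ m @ ys" "m \<noteq> []" "hd m = c0" "last m = r0"
    "set m \<subseteq> R \<union> C"
    using assms(1,2) by (rule input_path_block_segment)
  have "distinct p" using assms(2) by (simp add: simple_path_def)
  then have "v \<in> set m"
    using distinct_infix_between_iff[OF seg(1) _ seg(2), of v] seg(3,4) assms(3-8) by blast
  then show ?thesis using seg(5) by blast
qed

lemma block_node_on_input_path_in_L:
  assumes p: "i \<in> Ins" "simple_path E i out p" and v: "v \<in> set p" "v \<in> R \<union> C"
  shows "v \<in> L"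
proof -
  obtain xs m ys where seg: "p = xs @ m @ ys" "m \<noteq> []" "hd m = c0" "last m = r0"
    "set m \<subseteq> R \<union> C" "set (xs @ ys) \<inter> (R \<union> C) = {}"
    using p by (rule input_path_block_segment)
  have "v \<in> set m" using v seg(1,6) by auto
  have m_path: "simple_path E c0 r0 m" using simple_path_infix[of E i out xs m ys] p(2) seg(1-4)
    by simp
  have "simple_node E j out v" if "j \<in> Ins" for j
  proof -
    obtain pj where "simple_path E j out pj" using \<open>j \<in> Ins\<close> by (rule input_path_exists)
    then obtain p' where "simple_path E j out p'" "set p' \<inter> (R \<union> C) = set m"
      using \<open>j \<in> Ins\<close> m_path seg(5) input_path_reroute by blast
    then show ?thesis using \<open>v \<in> set m\<close> unfolding simple_node_def by blast
  qed
  moreover have "distinct p" using p(2) by (simp add: simple_path_def)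
  then have "\<exists>x y z. x \<le> y \<and> y \<le> z \<and> z < length p \<and> p ! x = c0 \<and> p ! y = v \<and> p ! z = r0"
    using distinct_infix_between_iff[OF seg(1) _ seg(2), of v] \<open>v \<in> set m\<close> seg(3,4) by simp
  then have "\<exists>i\<in>Ins. \<exists>p. simple_path E i out p \<and>
      (\<exists>x y z. x \<le> y \<and> y \<le> z \<and> z < length p \<and> p ! x = c0 \<and> p ! y = v \<and> p ! z = r0)"
    using p by blast
  moreover have "v \<in> V" using v(2) by (auto simp: R_def C_def)
  ultimately show ?thesis unfolding L_set_def abs_simple_def by simp
qed

lemma c0_r0_in_L: "c0 \<in> L" "r0 \<in> L"
proof -
  obtain i where i: "i \<in> Ins" using Ins_nonempty by blast
  then obtain p where p: "simple_path E i out p" by (rule input_path_exists)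
  show "c0 \<in> L" "r0 \<in> L"
    using block_node_on_input_path_in_L[OF i p] input_path_meets_c0_r0[OF i p] c0_in_C r0_in_R
    by blast+
qed

lemma L_subset_block: "L \<subseteq> R \<union> C"
proof
  fix v assume "v \<in> L"
  then obtain i p x y z where "i \<in> Ins" "simple_path E i out p"
    "x \<le> y" "y \<le> z" "z < length p" "p ! x = c0" "p ! y = v" "p ! z = r0"
    unfolding L_set_def by blast
  then show "v \<in> R \<union> C" by (rule input_path_between_c0_r0)
qed

lemma cb_antimono_off_input_path:
  assumes p: "i \<in> Ins" "simple_path E i out p"
    and "(x, y) \<in> (E \<inter> (V - set p) \<times> (V - set p))\<^sup>*"
  shows "cb y \<le> cb x"
  using assms(3)
proof (induction rule: rtrancl_induct)
  case (step y z)
  then have yz: "(y, z) \<in> E" "y \<in> V - set p" "z \<in> V - set p" by auto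
  have "out \<in> set p" using p(2) unfolding simple_path_def by auto
  then have "hH_nz E Ins out z y" using yz by (auto simp: hH_nz_def)
  then have "rb z \<le> cb y" using fk_decompositionD(3)[OF fk] yz by blast
  moreover have "rb z = cb z" using input_path_off_rb_cb[OF p] yz(3) by blast
  ultimately show ?case using step.IH by simp
qed simp

lemma L'_subset_block: "L' \<subseteq> R \<union> C"
proof
  fix v assume "v \<in> L'"
  show "v \<in> R \<union> C"
  proof (cases "v \<in> L")
    case True
    then show ?thesis using L_subset_block by blast
  next
    case False
    then obtain i p u where p: "i \<in> Ins" "simple_path E i out p"
      and "u \<in> L" and equiv: "cs_equiv V E p u v"
      using \<open>v \<in> L'\<close> unfolding L'_set_def by blast
    have off: "u \<in> V - set p" "v \<in> V - set p" using equiv unfolding cs_equiv_def by auto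
    then have "u \<in> D"
      using L_subset_block \<open>u \<in> L\<close> block_node_in_D input_path_meets_c0_r0[OF p] by blast
    moreover have "cb v = cb u"
      using equiv cb_antimono_off_input_path[OF p] unfolding cs_equiv_def by (meson antisym)
    moreover have "rb v = cb v" using input_path_off_rb_cb[OF p] off(2) by blast
    ultimately show ?thesis using off(2) by (simp add: D_def C_def R_def)
  qed
qed

lemma D_reachable_from_c0:
  assumes "x \<in> D"
  shows "(c0, x) \<in> E\<^sup>*"
proof (rule ccontr)
  assume "(c0, x) \<notin> E\<^sup>*"
  define U where "U = {x \<in> D. (c0, x) \<notin> E\<^sup>*}"
  have U: "U \<subseteq> D" "U \<noteq> {}" using assms \<open>(c0, x) \<notin> E\<^sup>*\<close> by (auto simp: U_def)
  have card: "card D \<le> card U + card (D - U)"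
    using U(1) finite_D by (simp add: card_Diff_subset finite_subset card_mono)
  have "U \<subseteq> R - (D - U)" using U(1) D_subset_R by blast
  then obtain l j where "l \<in> insert c0 (D - U)" "j \<in> U" "(l, j) \<in> E"
    by (rule edge_into_block_rows[OF Diff_subset _ U(2) card])
  then show False by (auto simp: U_def intro: rtrancl_into_rtrancl)
qed

lemma input_path_strictly_between_c0_r0:
  assumes p: "i \<in> Ins" "simple_path E i out p"
    and "before_on p c0 v" "before_on p v r0"
  shows "v \<in> D"
proof -
  obtain x y y' z where xyz: "x < y" "y < length p" "p ! x = c0" "p ! y = v"
    "y' < z" "z < length p" "p ! y' = v" "p ! z = r0"
    using assms(3,4) unfolding before_on_def by blast
  have dist: "distinct p" using p(2) by (simp add: simple_path_def)
  then have "y' = y" using xyz nth_eq_iff_index_eq by (metis order.strict_trans)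
  then have "v \<noteq> c0" "v \<noteq> r0"
    using xyz nth_eq_iff_index_eq[OF dist] by (metis order.strict_trans less_irrefl)+
  moreover have "v \<in> R \<union> C"
    using input_path_between_c0_r0[OF p, of x y z] xyz \<open>y' = y\<close> by simp
  ultimately show ?thesis using block_node_in_D by blast
qed

lemma block_detour:
  assumes "c \<in> D"
  obtains Q where "simple_path E c0 r0 Q" "set Q \<subseteq> R \<union> C - {c}"
proof -
  define W where "W = insert c0 (D - {c})"
  define Y where "Y = {y \<in> D - {c}. (c0, y) \<in> (E \<inter> W \<times> W)\<^sup>*}"
  have Y: "Y \<subseteq> D" "c \<notin> Y" by (auto simp: Y_def)
  have "finite Y" using finite_subset[OF Y(1) finite_D] .
  then have "card (R - insert c Y) = card D - card Y"
    using Y assms card_D D_subset_R by (simp add: card_Diff_subset subset_iff)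
  moreover have "card Y \<le> card D" using card_mono[OF finite_D Y(1)] .
  ultimately have S: "R - insert c Y \<subseteq> R - Y" "card D \<le> card (R - insert c Y) + card Y"
    by auto
  have "r0 \<in> R - insert c Y" using r0_in_R Y(1) assms R_eq D_subset_C r0_notin_C by blast
  then have "R - insert c Y \<noteq> {}" by blast
  then obtain l j where lj: "l \<in> insert c0 Y" "j \<in> R - insert c Y" "(l, j) \<in> E"
    by (rule edge_into_block_rows[OF Y(1) S(1) _ S(2)])
  have "(c0, l) \<in> (E \<inter> W \<times> W)\<^sup>*" "l \<in> W" using lj(1) by (auto simp: Y_def W_def)
  moreover have "j = r0"
  proof (rule ccontr)
    assume "j \<noteq> r0"
    then have "j \<in> D - {c}" using lj(2) R_eq by blast
    with \<open>(c0, l) \<in> _\<close> \<open>l \<in> W\<close> lj(3) have "j \<in> Y"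
      by (auto simp: Y_def W_def intro: rtrancl_into_rtrancl)
    with lj(2) show False by blast
  qed
  ultimately have "(c0, r0) \<in> (E \<inter> insert r0 W \<times> insert r0 W)\<^sup>*"
    using lj(3) rtrancl_mono[of "E \<inter> W \<times> W" "E \<inter> insert r0 W \<times> insert r0 W"]
    by (auto intro: rtrancl_into_rtrancl)
  then obtain Q where "simple_path E c0 r0 Q" "set Q \<subseteq> insert r0 W"
    by (rule rtrancl_imp_simple_path) (simp add: W_def)
  moreover have "insert r0 W \<subseteq> R \<union> C - {c}"
    using assms c0_notin_D r0_notin_D r0_in_R c0_in_C D_subset_R by (auto simp: W_def)
  ultimately show thesis using that by blast
qed

lemma no_super_simple_between_c0_r0:
  assumes "abs_super_simple E Ins out c" "i \<in> Ins" "simple_path E i out p"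
    and "before_on p c0 c" "before_on p c r0"
  shows False
proof -
  have "c \<in> D" using assms(2-5) by (rule input_path_strictly_between_c0_r0)
  then obtain Q where Q: "simple_path E c0 r0 Q" "set Q \<subseteq> R \<union> C - {c}" by (rule block_detour)
  obtain p' where "simple_path E i out p'" "set p' \<inter> (R \<union> C) = set Q"
    using input_path_reroute[OF assms(2,3) Q(1)] Q(2) by blast
  moreover have "c \<in> R \<union> C" using \<open>c \<in> D\<close> D_subset_R by blast
  ultimately show False using assms(1,2) Q(2) unfolding abs_super_simple_def by blast
qed

lemma adjacent_c0_r0: "adjacent_super_simple E Ins out c0 r0"
  unfolding adjacent_super_simple_def
proof (intro conjI)
  show "abs_super_simple E Ins out c0" "abs_super_simple E Ins out r0"
    unfolding abs_super_simple_def using input_path_meets_c0_r0 by blast+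
  show "\<forall>i\<in>Ins. \<forall>p. simple_path E i out p \<longrightarrow> before_on p c0 r0"
    using input_path_c0_before_r0 by blast
qed (use c0_neq_r0 no_super_simple_between_c0_r0 in blast)+

lemma block_permutation:
  assumes "a \<in> R" "l \<in> C" "(l, a) \<in> E"
  obtains \<tau> where "\<tau> permutes R \<union> C" "\<tau> c0 = r0" "\<tau> a = l"
    "\<And>x. x \<in> R \<Longrightarrow> \<tau> x \<noteq> x \<Longrightarrow> (\<tau> x, x) \<in> E"
proof -
  have "hH_nz E Ins out a l" using assms out_notin_C by (auto simp: hH_nz_def)
  then obtain \<sigma> where \<sigma>: "bij_betw \<sigma> R C" "\<And>x. x \<in> R \<Longrightarrow> hH_nz E Ins out x (\<sigma> x)" "\<sigma> a = l"
    using fully_indecomposable_entry_on_transversal[OF block_fully_indecomposable finite_C assms(1,2)]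
    by blast
  define \<tau> where "\<tau> x = (if x = c0 then r0 else if x \<in> R then \<sigma> x else x)" for x
  have \<tau>_R: "\<tau> x = \<sigma> x" if "x \<in> R" for x using that c0_notin_R by (auto simp: \<tau>_def)
  have "bij_betw \<tau> R C" using \<sigma>(1) by (simp add: \<tau>_R cong: bij_betw_cong)
  moreover have "bij_betw \<tau> {c0} {r0}" by (simp add: \<tau>_def)
  ultimately have "bij_betw \<tau> (R \<union> {c0}) (C \<union> {r0})"
    using r0_notin_C by (intro bij_betw_combine) auto
  moreover have "R \<union> {c0} = R \<union> C" "C \<union> {r0} = R \<union> C" using block_union R_eq C_eq by auto
  ultimately have perm: "\<tau> permutes R \<union> C"
    by (intro bij_imp_permutes) (auto simp: \<tau>_def c0_in_C)
  have edge: "(\<tau> x, x) \<in> E" if "x \<in> R" "\<tau> x \<noteq> x" for x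
  proof -
    have "\<sigma> x \<in> C" using \<sigma>(1) that(1) by (rule bij_betw_apply)
    then have "\<sigma> x \<noteq> out" using out_notin_C by blast
    then show ?thesis using \<sigma>(2)[OF that(1)] that \<tau>_R by (auto simp: hH_nz_def)
  qed
  have "\<tau> c0 = r0" "\<tau> a = l" using \<tau>_R[OF assms(1)] \<sigma>(3) by (simp_all add: \<tau>_def)
  with perm show thesis using edge by (rule that)
qed

lemma block_cycle_through_edge:
  assumes a: "a \<in> D" "\<forall>i\<in>Ins. \<not> simple_node E i out a" and l: "l \<in> C" "(l, a) \<in> E"
  obtains i p K where "i \<in> Ins" "simple_path E i out p" "K \<subseteq> D - set p" "a \<in> K" "l \<in> K"
    "K \<times> K \<subseteq> (E \<inter> K \<times> K)\<^sup>*"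
proof -
  obtain \<tau> where \<tau>: "\<tau> permutes R \<union> C" "\<tau> c0 = r0" "\<tau> a = l"
    "\<And>x. x \<in> R \<Longrightarrow> \<tau> x \<noteq> x \<Longrightarrow> (\<tau> x, x) \<in> E"
    using a(1) D_subset_R l by (blast intro: block_permutation)
  have perm: "permutation \<tau>" using \<tau>(1) finite_R finite_C by (auto simp: permutation_permutes)
  have orbit_block: "orbit \<tau> x \<subseteq> R \<union> C" if "x \<in> R \<union> C" for x
    using permutes_orbit_subset[OF \<tau>(1) that] .
  have c0_block: "c0 \<in> R \<union> C" using c0_in_C by blast
  obtain Q where Q: "simple_path E c0 r0 Q" "set Q = orbit \<tau> c0"
  proof (rule orbit_simple_path[OF perm])
    show "\<tau> c0 \<noteq> c0" using \<tau>(2) c0_neq_r0 by simp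
    show "(\<tau> y, y) \<in> E" if "y \<in> orbit \<tau> c0" "y \<noteq> c0" "\<tau> y \<noteq> y" for y
      using \<tau>(4) orbit_block[OF c0_block] that eq_c0I by blast
  qed (use \<tau>(2) in simp)
  obtain i where i: "i \<in> Ins" using Ins_nonempty by blast
  then obtain p0 where "simple_path E i out p0" by (rule input_path_exists)
  then obtain p where p: "simple_path E i out p" "set p \<inter> (R \<union> C) = orbit \<tau> c0"
    using input_path_reroute[OF i _ Q(1)] Q(2) orbit_block[OF c0_block] by metis
  have "a \<notin> orbit \<tau> c0" using a(2) i p unfolding simple_node_def by blast
  then have disjoint: "orbit \<tau> a \<inter> orbit \<tau> c0 = {}"
    using orbit_cyclic_eq3[OF cyclic_on_orbit'[OF perm]] permutation_self_in_orbit[OF perm] by blast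
  have "c0 \<in> orbit \<tau> c0" "r0 \<in> orbit \<tau> c0"
    using permutation_self_in_orbit[OF perm] orbit.base[of \<tau> c0] \<tau>(2) by simp_all
  moreover have "orbit \<tau> a \<subseteq> R \<union> C" using orbit_block a(1) D_subset_R by blast
  ultimately have "orbit \<tau> a \<subseteq> D" using disjoint block_node_in_D by blast
  moreover have "orbit \<tau> a \<inter> set p = {}"
    using disjoint p(2) \<open>orbit \<tau> a \<subseteq> R \<union> C\<close> by blast
  ultimately have orbit_a: "orbit \<tau> a \<subseteq> D - set p" by blast
  have "\<tau> y \<noteq> y \<Longrightarrow> (\<tau> y, y) \<in> E" if "y \<in> orbit \<tau> a" for y
    using \<tau>(4) orbit_a that D_subset_R by blast
  then have "orbit \<tau> a \<times> orbit \<tau> a \<subseteq> (E \<inter> orbit \<tau> a \<times> orbit \<tau> a)\<^sup>*"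
    using orbit_strongly_connected[OF perm] by blast
  moreover have "a \<in> orbit \<tau> a" "l \<in> orbit \<tau> a"
    using permutation_self_in_orbit[OF perm] orbit.base[of \<tau> a] \<tau>(3) by simp_all
  ultimately show thesis using that[OF i p(1) orbit_a] by blast
qed

lemma nonsimple_block_node_abs_appendage:
  assumes "d \<in> D" "\<forall>i\<in>Ins. \<not> simple_node E i out d"
  shows "abs_appendage E Ins out d"
  unfolding abs_appendage_def appendage_node_def
proof (intro ballI conjI)
  fix i assume "i \<in> Ins"
  then obtain p where p: "simple_path E i out p" by (rule input_path_exists)
  have "(i, c0) \<in> E\<^sup>*" using simple_path_rtrancl[OF p input_path_meets_c0_r0(1)[OF \<open>i \<in> Ins\<close> p]] .
  then show "(i, d) \<in> E\<^sup>*" using D_reachable_from_c0[OF assms(1)] by (rule rtrancl_trans)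
  show "\<not> simple_node E i out d" using assms(2) \<open>i \<in> Ins\<close> by blast
qed

lemma nonsimple_block_node_in_L':
  assumes d: "d \<in> D" "\<forall>i\<in>Ins. \<not> simple_node E i out d"
  shows "d \<in> L'"
proof -
  define Ns where "Ns = {x \<in> D. \<forall>i\<in>Ins. \<not> simple_node E i out x}"
  define A where "A = {x \<in> Ns. (d, x) \<in> (E \<inter> Ns \<times> Ns)\<^sup>* \<and> (x, d) \<in> (E \<inter> Ns \<times> Ns)\<^sup>*}"
  have A: "A \<subseteq> D" "A \<noteq> {}" using d by (auto simp: A_def Ns_def)
  have card: "card D \<le> card A + card (D - A)"
    using A(1) finite_D by (simp add: card_Diff_subset finite_subset card_mono)
  have "A \<subseteq> R - (D - A)" using A(1) D_subset_R by blast
  then obtain l a where la: "l \<in> insert c0 (D - A)" "a \<in> A" "(l, a) \<in> E"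
    by (rule edge_into_block_rows[OF Diff_subset _ A(2) card])
  have "l \<in> C" "l \<notin> A" using la(1) c0_in_C D_subset_C c0_notin_D A(1) by blast+
  have "a \<in> D" "\<forall>i\<in>Ins. \<not> simple_node E i out a" using la(2) by (auto simp: A_def Ns_def)
  then obtain i p K where cyc: "i \<in> Ins" "simple_path E i out p" "K \<subseteq> D - set p" "a \<in> K" "l \<in> K"
    "K \<times> K \<subseteq> (E \<inter> K \<times> K)\<^sup>*"
    using \<open>l \<in> C\<close> la(3) by (rule block_cycle_through_edge)
  have "\<not> K \<subseteq> Ns"
  proof
    assume "K \<subseteq> Ns"
    then have "(E \<inter> K \<times> K)\<^sup>* \<subseteq> (E \<inter> Ns \<times> Ns)\<^sup>*" by (intro rtrancl_mono) blast
    then have "l \<in> A" using cyc(4-6) la(2) \<open>K \<subseteq> Ns\<close> unfolding A_def by (blast intro: rtrancl_trans)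
    with \<open>l \<notin> A\<close> show False ..
  qed
  then obtain y where y: "y \<in> K" "y \<notin> Ns" by blast
  then obtain j q where "j \<in> Ins" "simple_path E j out q" "y \<in> set q"
    using cyc(3) unfolding Ns_def simple_node_def by blast
  then have "y \<in> L" using block_node_on_input_path_in_L y(1) cyc(3) D_subset_R by blast
  have "Ns \<inter> set p = {}" using cyc(1,2) unfolding Ns_def simple_node_def by blast
  then have "Ns \<subseteq> V - set p" using D_subset_V by (auto simp: Ns_def)
  moreover have "d \<in> Ns" "a \<in> Ns" using d la(2) by (auto simp: Ns_def A_def)
  ultimately have "cs_equiv V E p a d" using la(2) by (intro cs_equivI) (auto simp: A_def)
  moreover have "cs_equiv V E p y a"
    using cyc(3-6) y(1) D_subset_V by (intro cs_equivI[of K]) auto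
  ultimately have "cs_equiv V E p y d" by (rule cs_equiv_trans[rotated])
  moreover have "d \<in> V" using d(1) D_subset_V by blast
  ultimately show ?thesis
    using nonsimple_block_node_abs_appendage[OF d] cyc(1,2) \<open>y \<in> L\<close>
    unfolding L'_set_def by blast
qed

lemma D_subset_L': "D \<subseteq> L'"
proof
  fix d assume "d \<in> D"
  show "d \<in> L'"
  proof (cases "\<exists>i\<in>Ins. simple_node E i out d")
    case True
    then obtain i p where "i \<in> Ins" "simple_path E i out p" "d \<in> set p" unfolding simple_node_def
      by blast
    then have "d \<in> L" using block_node_on_input_path_in_L \<open>d \<in> D\<close> D_subset_R by blast
    then show ?thesis unfolding L'_set_def by blast
  next
    case False
    then show ?thesis using nonsimple_block_node_in_L' \<open>d \<in> D\<close> by blast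
  qed
qed

lemma L'_eq_block: "L' = R \<union> C"
proof
  show "L' \<subseteq> R \<union> C" by (rule L'_subset_block)
  have "c0 \<in> L'" "r0 \<in> L'" using c0_r0_in_L unfolding L'_set_def by blast+
  then show "R \<union> C \<subseteq> L'" unfolding block_union using D_subset_L' by blast
qed

lemma exists_adjacent_pair:
  "\<exists>a b. a \<in> V \<and> b \<in> V \<and> adjacent_super_simple E Ins out a b \<and>
     L'_set V E Ins out a b - {a} = R \<and> L'_set V E Ins out a b - {b} = C"
proof (intro exI conjI)
  show "c0 \<in> V" "r0 \<in> V" using c0_in_C r0_in_R by (auto simp: R_def C_def)
  show "adjacent_super_simple E Ins out c0 r0" by (rule adjacent_c0_r0)
  show "L' - {c0} = R" "L' - {r0} = C"
    unfolding L'_eq_block using c0_notin_R r0_notin_C R_eq C_eq c0_notin_D r0_notin_D by auto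
qed

end

section \<open>The homeostasis determinant\<close>

lemma detRC_hH_eq_jac:
  assumes "finite C" "card R = card C" "out \<notin> C"
  shows "detRC R C (hH E Ins out A c) = detRC R C (jac E A)"
proof -
  have "mat (card R) (card R)
          (\<lambda>(i, j). hH E Ins out A c (sorted_list_of_set R ! i) (sorted_list_of_set C ! j))
      = mat (card R) (card R)
          (\<lambda>(i, j). jac E A (sorted_list_of_set R ! i) (sorted_list_of_set C ! j))"
  proof (rule cong_mat)
    fix i j assume "i < card R" "j < card R"
    then have "sorted_list_of_set C ! j \<in> C"
      using assms(1,2) by (metis length_sorted_list_of_set nth_mem set_sorted_list_of_set)
    then show "(case (i, j) of (i, j) \<Rightarrow>
        hH E Ins out A c (sorted_list_of_set R ! i) (sorted_list_of_set C ! j))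
      = (case (i, j) of (i, j) \<Rightarrow> jac E A (sorted_list_of_set R ! i) (sorted_list_of_set C ! j))"
      using assms(3) by (auto simp: hH_def)
  qed auto
  then show ?thesis unfolding detRC_def by simp
qed

theorem theorem3p24:
  fixes V :: "'v::linorder set" and E :: "('v \<times> 'v) set" and Ins :: "'v set" and out :: 'v
    and q s :: nat and rb cb :: "'v \<Rightarrow> nat"
  assumes "core_network V E Ins out"
    and "card Ins \<ge> 2"
    and "fk_decomposition V (hH_nz E Ins out) q rb cb"
    and "s < q"
    and "structural_block Ins out {v \<in> V. rb v = s} {v \<in> V. cb v = s}"
  shows "\<exists>a b. a \<in> V \<and> b \<in> V \<and> adjacent_super_simple E Ins out a b \<and>
           (\<exists>\<sigma>::real. (\<sigma> = 1 \<or> \<sigma> = -1) \<and>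
              (\<forall>A c. detRC {v \<in> V. rb v = s} {v \<in> V. cb v = s} (hH E Ins out A c)
                     = \<sigma> * detRC (L'_set V E Ins out a b - {a}) (L'_set V E Ins out a b - {b}) (jac E A)))"
proof -
  interpret structural_homeostasis_block V E Ins out q s rb cb
    "{v \<in> V. rb v = s}" "{v \<in> V. cb v = s}" "{v \<in> V. rb v = s} \<inter> {v \<in> V. cb v = s}"
    "the_elem ({v \<in> V. rb v = s} - {v \<in> V. cb v = s})"
    "the_elem ({v \<in> V. cb v = s} - {v \<in> V. rb v = s})"
    using assms by unfold_locales
  obtain a b where ab: "a \<in> V" "b \<in> V" "adjacent_super_simple E Ins out a b"
    "L'_set V E Ins out a b - {a} = {v \<in> V. rb v = s}"
    "L'_set V E Ins out a b - {b} = {v \<in> V. cb v = s}"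
    using exists_adjacent_pair by blast
  have "detRC {v \<in> V. rb v = s} {v \<in> V. cb v = s} (hH E Ins out A c)
      = detRC {v \<in> V. rb v = s} {v \<in> V. cb v = s} (jac E A)" for A c
    using finite_C card_R_C out_notin_C by (rule detRC_hH_eq_jac)
  then have "\<exists>\<sigma>::real. (\<sigma> = 1 \<or> \<sigma> = -1) \<and>
      (\<forall>A c. detRC {v \<in> V. rb v = s} {v \<in> V. cb v = s} (hH E Ins out A c)
             = \<sigma> * detRC (L'_set V E Ins out a b - {a}) (L'_set V E Ins out a b - {b}) (jac E A))"
    using ab(4,5) by (intro exI[of _ 1]) simp
  with ab(1-3) show ?thesis by blast
qed

end
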